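(* Using the principal branches of $\sqrt{\cdot}$ and $\arctan$, for $|z-1|<1$, \[ \frac{\arctan\sqrt z}{\sqrt z}=\sum_{n=0}^{\infty}\frac{(-1)^n}{2^n}\Bigg[(2n-1)!!\,\frac{\pi}{4}+\frac{n!}{2^n}\sum_{k=1}^{n}(-1)^k\binom{2n-k}{n}\frac{2^{k/2}}{k}\sin\frac{3k\pi}{4}\Bigg]\frac{(z-1)^n}{n!}. \]
   Context: $(2n-1)!!=1\cdot3\cdots(2n-1)$ for $n\ge1$, and $(-1)!!=1$. An empty sum is $0$. *)

theory Defs
  imports "HOL-Analysis.Analysis"
begin

text \<open>Odd double factorial: oddfact n = (2n-1)!! = 1*3*...*(2n-1), with oddfact 0 = (-1)!! = 1.\<close>
fun oddfact :: "nat \<Rightarrow> nat" where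
  "oddfact 0 = 1"
| "oddfact (Suc n) = (2 * n + 1) * oddfact n"

end

theory Submission
  imports Defs
begin

text \<open>
  The Taylor coefficients a n of f x = Arctan (sqrt x) / sqrt x at 1 are determined by
  a 0 = pi / 4 and 2 (n + 1) a (n + 1) + (2 n + 1) a n = (-1)^n / 2^(n + 1): this recurrence
  forces |a n| \<le> 1, so g u = \<Sum>n. a n u^n converges for |u| < 1, and it is equivalent to
  2 (1 + u) g' u + g u = 1 / (2 + u), which is the equation 2 x f' x + f x = 1 / (1 + x)
  of f at x = 1 + u.

  It remains to show that the stated coefficients satisfy the recurrence. Since
  (-1)^k 2^(k/2) sin (3 k pi / 4) = Im ((1 - i)^k), the finite sum is the imaginary part of
  H n w = \<Sum>k=1..n. C(2n-k, n) w^k / k (harmonic_choose_sum) at w = 1 - i, and the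
  recurrence amounts to (n + 1) H (n + 1) - 2 (2 n + 1) H n = 2 C(2n, n) + (w - 2) P n with
  P n w = \<Sum>k\<le>n. C(2n-k, n) w^k (choose_power_sum (2 n) n), a polynomial identity
  checked coefficientwise.
  Pascal's rule gives (w - 1) P (n + 1) = w^2 P n + (w - 2) C(2n+1, n), which at w = 1 - i
  doubles Im ((1 + i) P n); hence Im ((1 + i) P n) = 2^n.
\<close>

definition choose_power_sum :: "nat \<Rightarrow> nat \<Rightarrow> 'a::comm_ring_1 \<Rightarrow> 'a" where
  "choose_power_sum a n w = (\<Sum>k\<le>a. of_nat ((a - k) choose n) * w ^ k)"

lemma choose_power_sum_Suc:
  "choose_power_sum (Suc a) n w = of_nat (Suc a choose n) + w * choose_power_sum a n w"
  unfolding choose_power_sum_def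
  by (subst sum.atMost_Suc_shift) (simp add: sum_distrib_left mult_ac del: sum.atMost_Suc)

lemma choose_power_sum_Suc_Suc:
  "choose_power_sum (Suc a) (Suc n) w = choose_power_sum a n w + choose_power_sum a (Suc n) w"
proof -
  have "choose_power_sum (Suc a) (Suc n) w = (\<Sum>k\<le>a. of_nat ((Suc a - k) choose Suc n) * w ^ k)"
    unfolding choose_power_sum_def by (simp add: sum.atMost_Suc)
  also have "\<dots> = (\<Sum>k\<le>a. of_nat ((a - k) choose n) * w ^ k + of_nat ((a - k) choose Suc n) * w ^ k)"
    by (intro sum.cong) (auto simp: Suc_diff_le algebra_simps)
  finally show ?thesis
    by (simp add: choose_power_sum_def sum.distrib)
qed

lemma choose_power_sum_eq_atMost:
  "choose_power_sum a n w = (\<Sum>k\<le>a - n. of_nat ((a - k) choose n) * w ^ k)"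
  unfolding choose_power_sum_def
proof (rule sum.mono_neutral_right)
  show "\<forall>k\<in>{..a} - {..a - n}. of_nat ((a - k) choose n) * w ^ k = 0"
  proof
    fix k assume "k \<in> {..a} - {..a - n}"
    then have "a - k < n" by auto
    then show "of_nat ((a - k) choose n) * w ^ k = 0" by (simp add: binomial_eq_0)
  qed
qed auto

lemma choose_power_sum_central_rec:
  fixes w :: "'a::comm_ring_1"
  shows "(w - 1) * choose_power_sum (2 * Suc n) (Suc n) w
      = w\<^sup>2 * choose_power_sum (2 * n) n w + (w - 2) * of_nat (Suc (2 * n) choose n)"
proof -
  define c where "c = (of_nat (Suc (2 * n) choose n) :: 'a)"
  define A where "A = choose_power_sum (Suc (Suc (2 * n))) (Suc n) w"
  define B where "B = choose_power_sum (Suc (2 * n)) (Suc n) w"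
  define P where "P = choose_power_sum (2 * n) n w"
  have "Suc (2 * n) choose Suc n = Suc (2 * n) choose n"
    by (subst binomial_symmetric) auto
  then have "A = 2 * c + w * B"
    using choose_power_sum_Suc[of "Suc (2 * n)" "Suc n" w] by (simp add: A_def B_def c_def)
  moreover have "A = c + w * P + B"
    using choose_power_sum_Suc_Suc[of "Suc (2 * n)" n w] choose_power_sum_Suc[of "2 * n" n w]
    by (simp add: A_def B_def P_def c_def)
  ultimately have "(w - 1) * A = w\<^sup>2 * P + (w - 2) * c"
    by (simp add: power2_eq_square algebra_simps)
  moreover have "2 * Suc n = Suc (Suc (2 * n))"
    by simp
  ultimately show ?thesis
    by (simp add: A_def P_def c_def)
qed

lemma Im_choose_power_sum_central:
  "Im ((1 + \<i>) * choose_power_sum (2 * n) n (1 - \<i>)) = 2 ^ n"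
proof (induction n)
  case 0
  then show ?case by (simp add: choose_power_sum_def)
next
  case (Suc n)
  have "(1 + \<i>) * choose_power_sum (2 * Suc n) (Suc n) (1 - \<i>)
      = 2 * ((1 + \<i>) * choose_power_sum (2 * n) n (1 - \<i>)) + 2 * of_nat (Suc (2 * n) choose n)"
    using arg_cong[OF choose_power_sum_central_rec[of "1 - \<i>" n], of "\<lambda>x. \<i> * (1 + \<i>) * x"]
    by (simp add: power2_eq_square algebra_simps)
  then show ?case using Suc.IH by simp
qed

lemma choose_three_term_identity:
  "(of_nat (m + 2) * of_nat ((m + j + 2) choose (m + 2))
      - 2 * (2 * of_nat m + 3) * of_nat ((m + j) choose (m + 1)) :: 'a::comm_ring_1)
   = (of_nat m + 2 - of_nat j) * (of_nat ((m + j + 1) choose (m + 1)) - 2 * of_nat ((m + j) choose (m + 1)))"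
proof -
  define x :: 'a where "x = of_nat ((m + j) choose m)"
  define y :: 'a where "y = of_nat ((m + j) choose (m + 1))"
  define z :: 'a where "z = of_nat ((m + j + 1) choose (m + 1))"
  have pascal: "z = x + y"
    by (simp add: x_def y_def z_def)
  have absorb: "(of_nat m + 1) * z = (of_nat m + of_nat j + 1) * x"
    using arg_cong[OF Suc_times_binomial[of m "m + j"], of "of_nat :: nat \<Rightarrow> 'a"]
    by (simp add: x_def z_def algebra_simps)
  have "of_nat (m + 2) * of_nat ((m + j + 2) choose (m + 2)) = (of_nat m + of_nat j + 2) * z"
    using arg_cong[OF Suc_times_binomial[of "Suc m" "Suc (m + j)"], of "of_nat :: nat \<Rightarrow> 'a"]
    by (simp add: z_def algebra_simps)
  moreover have "(of_nat m + of_nat j + 2) * z - 2 * (2 * of_nat m + 3) * (z - x)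
      = (of_nat m + 2 - of_nat j) * (z - 2 * (z - x)) + 2 * ((of_nat m + of_nat j + 1) * x - (of_nat m + 1) * z)"
    by (simp add: algebra_simps)
  ultimately show ?thesis
    unfolding y_def[symmetric] z_def[symmetric] using pascal absorb by simp
qed

lemma central_choose_three_term_identity:
  assumes "0 < n" and "k \<le> n"
  shows "(of_nat (Suc n) * of_nat ((2 * n + 1 - k) choose Suc n)
      - 2 * (2 * of_nat n + 1) * of_nat ((2 * n - Suc k) choose n) :: 'a::comm_ring_1)
    = of_nat (Suc k) * (of_nat ((2 * n - k) choose n) - 2 * of_nat ((2 * n - Suc k) choose n))"
proof -
  have "n - 1 + (n - k) = 2 * n - Suc k" "2 * n - Suc k + 2 = 2 * n + 1 - k"
    "2 * n - Suc k + 1 = 2 * n - k" "n - 1 + 2 = Suc n" "n - 1 + 1 = n"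
    "2 * of_nat (n - 1) + 3 = (2 * of_nat n + 1 :: 'a)"
    "of_nat (n - 1) + 2 - of_nat (n - k) = (of_nat (Suc k) :: 'a)"
    using assms by (auto simp: of_nat_diff)
  with choose_three_term_identity[of "n - 1" "n - k", where 'a='a] show ?thesis
    by (simp only:)
qed

definition harmonic_choose_sum :: "nat \<Rightarrow> 'a::field_char_0 \<Rightarrow> 'a" where
  "harmonic_choose_sum n w = (\<Sum>k = 1..n. of_nat ((2 * n - k) choose n) * w ^ k / of_nat k)"

lemma harmonic_choose_sum_rec_coeffs:
  fixes w :: "'a::field_char_0"
  assumes "0 < n"
  shows "of_nat (Suc n) * harmonic_choose_sum (Suc n) w - of_nat (2 * (2 * n + 1)) * harmonic_choose_sum n w
    = (\<Sum>k\<le>n. (of_nat ((2 * n - k) choose n) - 2 * of_nat ((2 * n - Suc k) choose n)) * w ^ Suc k)"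
proof -
  let ?c = "\<lambda>i. of_nat ((2 * n - i) choose n) :: 'a"
  have shifted: "harmonic_choose_sum N w
      = (\<Sum>k<N. of_nat ((2 * N - Suc k) choose N) * w ^ Suc k / of_nat (Suc k))" for N
    unfolding harmonic_choose_sum_def by (simp add: sum.atLeast1_atMost_eq)
  have "harmonic_choose_sum n w = (\<Sum>k\<le>n. ?c (Suc k) * w ^ Suc k / of_nat (Suc k))"
    using assms by (simp add: shifted lessThan_Suc_atMost[symmetric] binomial_eq_0)
  moreover have "harmonic_choose_sum (Suc n) w
      = (\<Sum>k\<le>n. of_nat ((2 * n + 1 - k) choose Suc n) * w ^ Suc k / of_nat (Suc k))"
    by (simp add: shifted lessThan_Suc_atMost)
  moreover have "of_nat (Suc n) * (of_nat ((2 * n + 1 - k) choose Suc n) * w ^ Suc k / of_nat (Suc k))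
      - of_nat (2 * (2 * n + 1)) * (?c (Suc k) * w ^ Suc k / of_nat (Suc k))
      = (?c k - 2 * ?c (Suc k)) * w ^ Suc k" if "k \<le> n" for k
  proof -
    have "of_nat (Suc n) * (of_nat ((2 * n + 1 - k) choose Suc n) * w ^ Suc k / of_nat (Suc k))
        - of_nat (2 * (2 * n + 1)) * (?c (Suc k) * w ^ Suc k / of_nat (Suc k))
        = (of_nat (Suc n) * of_nat ((2 * n + 1 - k) choose Suc n) - 2 * (2 * of_nat n + 1) * ?c (Suc k))
          * w ^ Suc k / of_nat (Suc k)"
      by (simp add: diff_divide_distrib algebra_simps)
    also have "\<dots> = (?c k - 2 * ?c (Suc k)) * w ^ Suc k"
      by (simp only: central_choose_three_term_identity[OF assms that]) (simp del: of_nat_Suc)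
    finally show ?thesis .
  qed
  ultimately show ?thesis
    by (simp add: sum_distrib_left sum_subtractf[symmetric] del: of_nat_Suc)
qed

lemma choose_power_sum_central_coeffs:
  fixes w :: "'a::comm_ring_1"
  assumes "0 < n"
  shows "2 * of_nat (2 * n choose n) + (w - 2) * choose_power_sum (2 * n) n w
    = (\<Sum>k\<le>n. (of_nat ((2 * n - k) choose n) - 2 * of_nat ((2 * n - Suc k) choose n)) * w ^ Suc k)"
proof -
  let ?c = "\<lambda>i. of_nat ((2 * n - i) choose n) :: 'a"
  have "choose_power_sum (2 * n) n w = (\<Sum>k\<le>n. ?c k * w ^ k)"
    by (simp add: choose_power_sum_eq_atMost)
  also have "\<dots> = ?c 0 + (\<Sum>k<n. ?c (Suc k) * w ^ Suc k)"
    by (simp only: sum.atMost_shift) simp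
  also have "(\<Sum>k<n. ?c (Suc k) * w ^ Suc k) = (\<Sum>k\<le>n. ?c (Suc k) * w ^ Suc k)"
    using assms by (simp add: lessThan_Suc_atMost[symmetric] binomial_eq_0)
  finally have "choose_power_sum (2 * n) n w = ?c 0 + (\<Sum>k\<le>n. ?c (Suc k) * w ^ Suc k)" .
  moreover have "w * choose_power_sum (2 * n) n w = (\<Sum>k\<le>n. ?c k * w ^ Suc k)"
    by (simp add: choose_power_sum_eq_atMost sum_distrib_left mult_ac)
  ultimately show ?thesis
    by (simp add: algebra_simps sum_subtractf sum_distrib_left)
qed

lemma harmonic_choose_sum_rec:
  fixes w :: "'a::field_char_0"
  shows "of_nat (Suc n) * harmonic_choose_sum (Suc n) w - of_nat (2 * (2 * n + 1)) * harmonic_choose_sum n w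
       = 2 * of_nat (2 * n choose n) + (w - 2) * choose_power_sum (2 * n) n w"
proof (cases "n = 0")
  case True
  then show ?thesis
    by (simp add: harmonic_choose_sum_def choose_power_sum_def)
next
  case False
  then show ?thesis
    by (simp only: harmonic_choose_sum_rec_coeffs choose_power_sum_central_coeffs)
qed

lemma Im_one_minus_i_power:
  "Im ((1 - \<i>) ^ k) = (-1) ^ k * 2 powr (real k / 2) * sin (3 * real k * pi / 4)"
proof -
  have "1 - \<i> = rcis (sqrt 2) (- (pi / 4))"
    by (simp add: rcis_def cis.ctr complex_eq_iff cos_45 sin_45)
  then have "Im ((1 - \<i>) ^ k) = - (sqrt 2 ^ k * sin (real k * pi / 4))"
    by (simp add: DeMoivre2)
  moreover have "2 powr (real k / 2) = sqrt 2 ^ k"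
    by (simp add: powr_half_sqrt_powr powr_realpow real_sqrt_power)
  moreover have "sin (3 * real k * pi / 4) = - ((-1) ^ k * sin (real k * pi / 4))"
  proof -
    have "sin (3 * real k * pi / 4) = sin (real k * pi - real k * pi / 4)"
      by (rule arg_cong[where f = sin]) simp
    also have "\<dots> = - ((-1) ^ k * sin (real k * pi / 4))"
      by (simp only: sin_diff sin_npi cos_npi)
    finally show ?thesis .
  qed
  ultimately show ?thesis
    by simp
qed

lemma Im_harmonic_choose_sum_rec:
  "real (Suc n) * Im (harmonic_choose_sum (Suc n) (1 - \<i>))
     - 2 * (2 * real n + 1) * Im (harmonic_choose_sum n (1 - \<i>)) = - (2 ^ n)"
proof -
  have "1 - \<i> - 2 = - (1 + \<i>)"
    by simp
  then have "Im (2 * of_nat (2 * n choose n) + (1 - \<i> - 2) * choose_power_sum (2 * n) n (1 - \<i>)) = - (2 ^ n)"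
    using Im_choose_power_sum_central[of n] by simp
  with arg_cong[OF harmonic_choose_sum_rec[of n "1 - \<i>"], of Im] show ?thesis
    by (simp add: algebra_simps)
qed

definition arctan_sqrt_coeff :: "nat \<Rightarrow> real" where
  "arctan_sqrt_coeff n = (-1) ^ n / 2 ^ n *
     (real (oddfact n) * (pi / 4)
      + fact n / 2 ^ n *
        (\<Sum>k = 1..n. (-1) ^ k * real ((2 * n - k) choose n)
            * (2 powr (real k / 2)) / real k * sin (3 * real k * pi / 4))) / fact n"

lemma arctan_sqrt_coeff_eq:
  "arctan_sqrt_coeff n = (-1) ^ n * (real (oddfact n) * pi / (4 * 2 ^ n * fact n)
     + Im (harmonic_choose_sum n (1 - \<i>)) / 4 ^ n)"
proof -
  have "(\<Sum>k = 1..n. (-1) ^ k * real ((2 * n - k) choose n)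
            * (2 powr (real k / 2)) / real k * sin (3 * real k * pi / 4))
      = Im (harmonic_choose_sum n (1 - \<i>))"
    unfolding harmonic_choose_sum_def by (simp add: Im_one_minus_i_power mult_ac)
  then show ?thesis
    unfolding arctan_sqrt_coeff_def by (simp add: field_simps flip: power_mult_distrib)
qed

lemma arctan_sqrt_coeff_rec:
  "2 * real (Suc n) * arctan_sqrt_coeff (Suc n) + (2 * real n + 1) * arctan_sqrt_coeff n = (-1) ^ n / 2 ^ Suc n"
proof -
  define S where "S m = Im (harmonic_choose_sum m (1 - \<i>))" for m
  have rec: "real (Suc n) * S (Suc n) = 2 * (2 * real n + 1) * S n - 2 ^ n"
    using Im_harmonic_choose_sum_rec[of n] by (simp add: S_def algebra_simps)
  have "2 * real (Suc n) * arctan_sqrt_coeff (Suc n) + (2 * real n + 1) * arctan_sqrt_coeff n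
      = (-1) ^ n * ((2 * real n + 1) * S n / 4 ^ n - 2 * (real (Suc n) * S (Suc n)) / 4 ^ Suc n)"
    unfolding arctan_sqrt_coeff_eq S_def[symmetric]
    by (simp add: field_simps del: of_nat_Suc)
  also have "\<dots> = (-1) ^ n * 2 ^ n / (2 * 4 ^ n)"
    unfolding rec by (simp add: field_simps)
  also have "\<dots> = (-1) ^ n / 2 ^ Suc n"
    by (simp add: field_simps flip: power_mult_distrib)
  finally show ?thesis .
qed

lemma norm_le_one_if_arctan_sqrt_rec:
  fixes a :: "nat \<Rightarrow> 'a::real_normed_field"
  assumes rec: "\<And>n. 2 * of_nat (Suc n) * a (Suc n) + (2 * of_nat n + 1) * a n = (-1) ^ n / 2 ^ Suc n"
    and "norm (a 0) \<le> 1"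
  shows "norm (a n) \<le> 1"
proof (induction n)
  case 0
  show ?case by fact
next
  case (Suc n)
  have "2 * of_nat (Suc n) * a (Suc n) = (-1) ^ n / 2 ^ Suc n - (2 * of_nat n + 1) * a n"
    using rec[of n] by (simp add: eq_diff_eq)
  then have "2 * real (Suc n) * norm (a (Suc n)) = norm ((-1) ^ n / 2 ^ Suc n - (2 * of_nat n + 1) * a n)"
    by (metis norm_mult norm_numeral norm_of_nat)
  also have "\<dots> \<le> 1 / 2 ^ Suc n + (2 * real n + 1) * norm (a n)"
  proof -
    have "norm (2 * of_nat n + 1 :: 'a) = 2 * real n + 1"
      using norm_of_nat[of "2 * n + 1", where 'a='a] by (simp add: add.commute)
    then show ?thesis
      by (intro order_trans[OF norm_triangle_ineq4]) (simp add: norm_mult norm_divide norm_power)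
  qed
  also have "\<dots> \<le> 1 + (2 * real n + 1)"
  proof (intro add_mono mult_left_le)
    show "1 / 2 ^ Suc n \<le> (1::real)"
      using one_le_power[of "2::real" "Suc n"] by simp
  qed (use Suc.IH in simp_all)
  finally show ?case
    by simp
qed

lemma summable_powser_norm_le_one:
  fixes a :: "nat \<Rightarrow> 'a::{real_normed_field,banach}"
  assumes "\<And>n. norm (a n) \<le> 1" and "norm u < 1"
  shows "summable (\<lambda>n. a n * u ^ n)"
proof (rule summable_comparison_test)
  show "\<exists>N. \<forall>n\<ge>N. norm (a n * u ^ n) \<le> norm u ^ n"
    using assms(1) by (auto simp: norm_mult norm_power intro!: mult_left_le_one_le)
  show "summable (\<lambda>n. norm u ^ n)"
    using assms(2) by (simp add: summable_geometric)
qed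

lemma sums_one_div_two_plus:
  fixes u :: "'a::{real_normed_field,banach}"
  assumes "norm u < 2"
  shows "(\<lambda>n. (-1) ^ n / 2 ^ Suc n * u ^ n) sums (1 / (2 + u))"
proof -
  have "norm (- u / 2) < 1"
    using assms by (simp add: norm_divide)
  then have "(\<lambda>n. 1 / 2 * (- u / 2) ^ n) sums (1 / 2 * (1 / (1 - (- u / 2))))"
    by (intro sums_mult geometric_sums)
  moreover have "2 + u \<noteq> 0"
  proof
    assume "2 + u = 0"
    then have "u = -2"
      by (simp add: add_eq_0_iff)
    with assms show False
      by simp
  qed
  ultimately show ?thesis
    by (simp add: field_simps power_minus[of "u / 2"] power_divide)
qed

lemma powser_arctan_sqrt_ode:
  fixes a :: "nat \<Rightarrow> 'a::{real_normed_field,banach}"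
  assumes rec: "\<And>n. 2 * of_nat (Suc n) * a (Suc n) + (2 * of_nat n + 1) * a n = (-1) ^ n / 2 ^ Suc n"
    and summable: "summable (\<lambda>n. a n * u ^ n)" "summable (\<lambda>n. diffs a n * u ^ n)"
    and u: "norm u < 1"
  shows "2 * (1 + u) * (\<Sum>n. diffs a n * u ^ n) + (\<Sum>n. a n * u ^ n) = 1 / (2 + u)"
proof -
  define D where "D = (\<Sum>n. diffs a n * u ^ n)"
  have sD: "(\<lambda>n. diffs a n * u ^ n) sums D"
    unfolding D_def using summable(2) by (rule summable_sums)
  have "(\<lambda>n. of_nat (Suc n) * a (Suc n) * u ^ Suc n) sums (u * D)"
    using sums_mult[OF sD, of u] by (simp add: diffs_def algebra_simps)
  then have sD': "(\<lambda>n. of_nat n * a n * u ^ n) sums (u * D)"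
    using sums_Suc_iff[of "\<lambda>n. of_nat n * a n * u ^ n" "u * D"] by simp
  have "(\<lambda>n. 2 * (diffs a n * u ^ n) + 2 * (of_nat n * a n * u ^ n) + a n * u ^ n)
      sums (2 * D + 2 * (u * D) + (\<Sum>n. a n * u ^ n))"
    by (intro sums_add sums_mult sD sD' summable_sums summable(1))
  moreover have "(\<lambda>n. 2 * (diffs a n * u ^ n) + 2 * (of_nat n * a n * u ^ n) + a n * u ^ n)
      = (\<lambda>n. (-1) ^ n / 2 ^ Suc n * u ^ n)"
  proof
    fix n
    have "2 * (diffs a n * u ^ n) + 2 * (of_nat n * a n * u ^ n) + a n * u ^ n
        = (2 * of_nat (Suc n) * a (Suc n) + (2 * of_nat n + 1) * a n) * u ^ n"
      by (simp add: diffs_def algebra_simps del: of_nat_Suc)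
    also have "\<dots> = (-1) ^ n / 2 ^ Suc n * u ^ n"
      by (simp only: rec)
    finally show "2 * (diffs a n * u ^ n) + 2 * (of_nat n * a n * u ^ n) + a n * u ^ n
        = (-1) ^ n / 2 ^ Suc n * u ^ n" .
  qed
  moreover have "(\<lambda>n. (-1) ^ n / 2 ^ Suc n * u ^ n) sums (1 / (2 + u))"
    using u by (intro sums_one_div_two_plus) simp
  ultimately have "2 * D + 2 * (u * D) + (\<Sum>n. a n * u ^ n) = 1 / (2 + u)"
    using sums_unique2 by metis
  then show ?thesis
    unfolding D_def[symmetric] by (simp add: algebra_simps)
qed

lemma Re_csqrt_pos: "0 < Re x \<Longrightarrow> 0 < Re (csqrt x)"
  by (simp add: add_nonneg_pos)

lemma Arctan_csqrt_div_csqrt_unique: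
  fixes f f' :: "complex \<Rightarrow> complex"
  assumes deriv: "\<And>x. x \<in> ball 1 1 \<Longrightarrow> (f has_field_derivative f' x) (at x)"
    and ode: "\<And>x. x \<in> ball 1 1 \<Longrightarrow> 2 * x * f' x + f x = 1 / (1 + x)"
    and init: "f 1 = pi / 4"
    and z: "z \<in> ball 1 1"
  shows "f z = Arctan (csqrt z) / csqrt z"
proof -
  have Re_pos: "0 < Re x" if "x \<in> ball 1 1" for x
    using that abs_Re_le_cmod[of "1 - x"] by (simp add: dist_norm)
  define h where "h x = csqrt x * f x - Arctan (csqrt x)" for x
  have "(h has_field_derivative 0) (at x within ball 1 1)" if x: "x \<in> ball 1 1" for x
  proof -
    define w where "w = csqrt x"
    have "0 < Re w"
      unfolding w_def using Re_pos[OF x] by (rule Re_csqrt_pos)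
    then have "w \<noteq> 0" and x_eq: "x = w\<^sup>2"
      by (auto simp: w_def)
    have "1 + x \<noteq> 0"
      using Re_pos[OF x] by (auto simp: complex_eq_iff)
    have "x \<notin> \<real>\<^sub>\<le>\<^sub>0"
      using Re_pos[OF x] by (auto elim: nonpos_Reals_cases)
    then have "(h has_field_derivative
        inverse (2 * w) * f x + f' x * w - inverse (1 + w\<^sup>2) * inverse (2 * w)) (at x)"
      unfolding h_def w_def
      by (intro DERIV_diff DERIV_mult deriv[OF x] has_field_derivative_csqrt
          DERIV_chain2[OF has_field_derivative_Arctan]) (use \<open>0 < Re w\<close> in \<open>auto simp: w_def\<close>)
    also have "inverse (2 * w) * f x + f' x * w - inverse (1 + w\<^sup>2) * inverse (2 * w)
        = inverse (2 * w) * (2 * x * f' x + f x - 1 / (1 + x))"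
    proof -
      have "inverse (2 * w) * (2 * x * f' x) = f' x * w"
        using \<open>w \<noteq> 0\<close> unfolding x_eq by (simp add: field_simps power2_eq_square)
      then show ?thesis
        by (simp add: distrib_left right_diff_distrib x_eq inverse_eq_divide) (simp add: algebra_simps)
    qed
    also have "\<dots> = 0"
      by (simp add: ode[OF x])
    finally show ?thesis
      by (rule has_field_derivative_at_within)
  qed
  then obtain c where c: "\<forall>x\<in>ball 1 1. h x = c"
    using has_field_derivative_zero_constant[OF convex_ball] by blast
  have "Arctan 1 = pi / 4"
    using Arctan_of_real[of 1] by (simp add: arctan_one)
  then have "h 1 = 0"
    by (simp add: h_def init)
  moreover have "h z = h 1"
    using c z by simp
  ultimately have "csqrt z * f z = Arctan (csqrt z)"
    by (simp add: h_def)
  moreover have "csqrt z \<noteq> 0"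
    using Re_csqrt_pos[OF Re_pos[OF z]] by auto
  ultimately show ?thesis
    by (simp add: field_simps)
qed

lemma sums_Arctan_csqrt_div_csqrt:
  fixes a :: "nat \<Rightarrow> complex"
  assumes rec: "\<And>n. 2 * of_nat (Suc n) * a (Suc n) + (2 * of_nat n + 1) * a n = (-1) ^ n / 2 ^ Suc n"
    and a0: "a 0 = pi / 4"
    and z: "norm (z - 1) < 1"
  shows "(\<lambda>n. a n * (z - 1) ^ n) sums (Arctan (csqrt z) / csqrt z)"
proof -
  define F where "F u = (\<Sum>n. a n * u ^ n)" for u
  define F' where "F' u = (\<Sum>n. diffs a n * u ^ n)" for u
  have "norm (a n) \<le> 1" for n
    using rec by (rule norm_le_one_if_arctan_sqrt_rec) (use pi_less_4 in \<open>simp add: a0 norm_divide\<close>)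
  then have summable: "summable (\<lambda>n. a n * u ^ n)" if "norm u < 1" for u
    using that by (rule summable_powser_norm_le_one)
  have "F (z - 1) = Arctan (csqrt z) / csqrt z"
  proof (rule Arctan_csqrt_div_csqrt_unique[where f' = "\<lambda>x. F' (x - 1)"])
    fix x :: complex
    assume "x \<in> ball 1 1"
    then have x: "norm (x - 1) < 1"
      by (simp add: dist_norm norm_minus_commute)
    have "(F has_field_derivative F' (x - 1)) (at (x - 1))"
      unfolding F_def[abs_def] F'_def using x by (intro termdiffs_strong'[of 1]) (auto simp: summable)
    moreover have "((\<lambda>x. x - 1) has_field_derivative 1) (at x)"
      by (auto intro!: derivative_eq_intros)
    ultimately show "((\<lambda>x. F (x - 1)) has_field_derivative F' (x - 1)) (at x)"
      using DERIV_chain2 by fastforce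
    have "2 * (1 + (x - 1)) * F' (x - 1) + F (x - 1) = 1 / (2 + (x - 1))"
      unfolding F_def F'_def
      by (rule powser_arctan_sqrt_ode[OF rec summable[OF x] termdiff_converges[OF x] x])
         (use summable in auto)
    then show "2 * x * F' (x - 1) + F (x - 1) = 1 / (1 + x)"
      by (simp add: add.commute)
  next
    have "F 0 = a 0"
      unfolding F_def by (rule powser_zero)
    then show "F (1 - 1) = pi / 4"
      by (simp add: a0)
  qed (use z in \<open>simp add: dist_norm norm_minus_commute\<close>)
  moreover have "(\<lambda>n. a n * (z - 1) ^ n) sums F (z - 1)"
    unfolding F_def using summable[OF z] by (rule summable_sums)
  ultimately show ?thesis
    by simp
qed

theorem theorem3p2:
  fixes z :: complex
  assumes "cmod (z - 1) < 1"
  shows "(\<lambda>n. complex_of_real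
            ((-1) ^ n / 2 ^ n *
              (real (oddfact n) * (pi / 4)
               + fact n / 2 ^ n *
                 (\<Sum>k = 1..n. (-1) ^ k * real ((2 * n - k) choose n)
                     * (2 powr (real k / 2)) / real k * sin (3 * real k * pi / 4))))
           * (z - 1) ^ n / fact n)
         sums (Arctan (csqrt z) / csqrt z)"
proof -
  have "(\<lambda>n. complex_of_real (arctan_sqrt_coeff n) * (z - 1) ^ n) sums (Arctan (csqrt z) / csqrt z)"
  proof (rule sums_Arctan_csqrt_div_csqrt)
    show "2 * of_nat (Suc n) * complex_of_real (arctan_sqrt_coeff (Suc n))
        + (2 * of_nat n + 1) * complex_of_real (arctan_sqrt_coeff n) = (-1) ^ n / 2 ^ Suc n" for n
      using arg_cong[OF arctan_sqrt_coeff_rec[of n], of complex_of_real] by simp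
  qed (use assms in \<open>simp_all add: arctan_sqrt_coeff_def\<close>)
  then show ?thesis
    by (simp add: arctan_sqrt_coeff_def of_real_divide)
qed

end
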